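(* Let $\mathcal{H}$ be a quantum system of dimension $d$ with orthonormal basis $\{|i\rangle\}_{i=1}^d$, and let $\sigma=\sum_{i=1}^d p_i|i\rangle\langle i|$ where $\{p_i\}$ is a probability distribution with $p_1\ge p_2\ge\cdots\ge p_d$. Let $\epsilon>0$, and let $\sigma^{(A)}$ and $\sigma^{(G)}$ be the approximate states of $\sigma$ obtained by the arithmetic mean method and the geometric mean method, respectively. Then $$\|\sigma^{(A)}-\sigma\|_1\le\epsilon,\qquad \|\sigma^{(G)}-\sigma\|_1\le\epsilon .$$
   Context: $\|\cdot\|_1$ is the trace norm. Arithmetic mean method: let $k_0=0$; for $i=1,2,\dots$ let $k_i$ be the largest integer ($\le d$) such that $|p_{k_{i-1}+1}-p_{k_i}|\le\epsilon/d$, and set $I_i=\{k_{i-1}+1,\dots,k_i\}$; stop at the index $L$ with $k_L=d$. For $j\in I_i$ set $p_j^{(A)}=\frac{1}{|I_i|}\sum_{m\in I_i}p_m$, and $\sigma^{(A)}=\sum_{j=1}^d p_j^{(A)}|j\rangle\langle j|$. Geometric mean method: identical except that $k_i$ is the largest integer ($\le d$) such that $p_{k_i}/p_{k_{i-1}+1}\ge 1/(1+\epsilon)$; the bins $I_i$ are defined likewise, $p_j^{(G)}=\frac{1}{|I_i|}\sum_{m\in I_i}p_m$ for $j\in I_i$, and $\sigma^{(G)}=\sum_{j} p_j^{(G)}|j\rangle\langle j|$. *)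

theory Defs
  imports Complex_Main "Jordan_Normal_Form.Matrix"
begin

text \<open>Operators on a d-dimensional Hilbert space are represented as d x d complex
  matrices w.r.t. the fixed orthonormal basis |1>,...,|d> (matrix index i-1 for |i>).\<close>

definition dagger :: "complex mat \<Rightarrow> complex mat" where
  "dagger A = mat (dim_col A) (dim_row A) (\<lambda>(i,j). cnj (A $$ (j,i)))"

definition psd :: "nat \<Rightarrow> complex mat \<Rightarrow> bool" where
  "psd n B \<longleftrightarrow> B \<in> carrier_mat n n \<and>
     (\<forall>v \<in> carrier_vec n. Im (v \<bullet>c (B *\<^sub>v v)) = 0 \<and> Re (v \<bullet>c (B *\<^sub>v v)) \<ge> 0)"

definition mtrace :: "complex mat \<Rightarrow> complex" where
  "mtrace A = (\<Sum>i<dim_row A. A $$ (i,i))"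

definition trace_norm :: "complex mat \<Rightarrow> real" where
  "trace_norm A = Re (mtrace (THE B. psd (dim_col A) B \<and> B * B = dagger A * A))"

definition diag_state :: "nat \<Rightarrow> (nat \<Rightarrow> real) \<Rightarrow> complex mat" where
  "diag_state d q = mat d d (\<lambda>(i,j). if i = j then complex_of_real (q (i+1)) else 0)"

fun bnd :: "nat \<Rightarrow> (nat \<Rightarrow> nat \<Rightarrow> bool) \<Rightarrow> nat \<Rightarrow> nat" where
  "bnd d cond 0 = 0"
| "bnd d cond (Suc i) =
     (if bnd d cond i \<ge> d then d
      else (GREATEST k. k \<le> d \<and> cond (Suc (bnd d cond i)) k))"

definition binned :: "nat \<Rightarrow> (nat \<Rightarrow> nat \<Rightarrow> bool) \<Rightarrow> (nat \<Rightarrow> real) \<Rightarrow> nat \<Rightarrow> real" where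
  "binned d cond p j =
     (let i = (LEAST i. j \<le> bnd d cond i);
          I = {Suc (bnd d cond (i - 1)) .. bnd d cond i}
      in (\<Sum>m\<in>I. p m) / real (card I))"

definition arith_cond :: "nat \<Rightarrow> real \<Rightarrow> (nat \<Rightarrow> real) \<Rightarrow> nat \<Rightarrow> nat \<Rightarrow> bool" where
  "arith_cond d \<epsilon> p s k \<longleftrightarrow> \<bar>p s - p k\<bar> \<le> \<epsilon> / real d"

text \<open>p_k / p_s \<ge> 1/(1+\<epsilon>), written multiplicatively (equivalent for p_s > 0).\<close>
definition geom_cond :: "real \<Rightarrow> (nat \<Rightarrow> real) \<Rightarrow> nat \<Rightarrow> nat \<Rightarrow> bool" where
  "geom_cond \<epsilon> p s k \<longleftrightarrow> (1 + \<epsilon>) * p k \<ge> p s"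

definition sigma_A :: "nat \<Rightarrow> real \<Rightarrow> (nat \<Rightarrow> real) \<Rightarrow> complex mat" where
  "sigma_A d \<epsilon> p = diag_state d (binned d (arith_cond d \<epsilon> p) p)"

definition sigma_G :: "nat \<Rightarrow> real \<Rightarrow> (nat \<Rightarrow> real) \<Rightarrow> complex mat" where
  "sigma_G d \<epsilon> p = diag_state d (binned d (geom_cond \<epsilon> p) p)"

end

theory Submission
  imports Defs
begin

(* Both approximations are diagonal in the basis of sigma, so each difference
  sigma' - sigma is a real diagonal matrix D.  The positive semidefinite square root of
  D^dagger D = D^2 is |D|: a positive semidefinite B with B^2 = |D|^2 commutes with |D|,
  so (B + |D|)(B - |D|) = 0, positivity forces (B - |D|)^2 = 0, and a Hermitian matrix
  with square zero vanishes.  Hence the trace norm of D is sum_j |p'_j - p_j|.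
  Every index j lies in a bin {s..k} on which p decreases, so p_j differs from the bin
  average by at most p_s - p_k; the bin condition bounds this by eps/d (arithmetic
  mean) or by eps p_k <= eps p_j (geometric mean), and summing over j gives eps. *)

lemma quadratic_form_eq_sum:
  assumes "B \<in> carrier_mat n n" "v \<in> carrier_vec n"
  shows "v \<bullet>c (B *\<^sub>v v) = (\<Sum>m<n. v $ m * cnj ((B *\<^sub>v v) $ m))"
  using assms by (simp add: scalar_prod_def atLeast0LessThan del: index_mult_mat_vec)

lemma mat_diag_mult_vec_index:
  assumes "v \<in> carrier_vec n" "m < n"
  shows "(mat_diag n f *\<^sub>v v) $ m = f m * v $ m"
  using assms by (simp add: mat_diag_def scalar_prod_def) (subst sum.remove[of _ m], auto)

lemma quadratic_form_mat_diag:
  assumes "v \<in> carrier_vec n"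
  shows "v \<bullet>c (mat_diag n (\<lambda>i. complex_of_real (c i)) *\<^sub>v v)
    = complex_of_real (\<Sum>m<n. c m * (cmod (v $ m))\<^sup>2)"
proof -
  let ?C = "mat_diag n (\<lambda>i. complex_of_real (c i))"
  have "v \<bullet>c (?C *\<^sub>v v) = (\<Sum>m<n. complex_of_real (c m) * (v $ m * cnj (v $ m)))"
    using assms
    by (simp add: quadratic_form_eq_sum[of _ n] mat_diag_mult_vec_index algebra_simps del: index_mult_mat_vec)
  also have "\<dots> = (\<Sum>m<n. complex_of_real (c m * (cmod (v $ m))\<^sup>2))"
    by (simp only: complex_norm_square of_real_mult)
  finally show ?thesis by simp
qed

lemma psd_mat_diag:
  assumes "\<forall>i<n. c i \<ge> 0"
  shows "psd n (mat_diag n (\<lambda>i. complex_of_real (c i)))"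
  unfolding psd_def using assms by (auto simp: quadratic_form_mat_diag intro!: sum_nonneg)

lemma quadratic_form_two_point:
  fixes x y :: complex
  assumes "B \<in> carrier_mat n n" "i < n" "j < n"
  defines "v \<equiv> vec n (\<lambda>m. (if m = i then x else 0) + (if m = j then y else 0))"
  shows "v \<bullet>c (B *\<^sub>v v)
    = x * cnj (B $$ (i,i) * x + B $$ (i,j) * y) + y * cnj (B $$ (j,i) * x + B $$ (j,j) * y)"
proof -
  have [simp]: "a * (if P then b else 0) = (if P then a * b else 0)"
    "(if P then b else 0) * a = (if P then b * a else 0)" for a b :: complex and P
    by simp_all
  have "(B *\<^sub>v v) $ m = B $$ (m,i) * x + B $$ (m,j) * y" if "m < n" for m
    using assms that by (simp add: scalar_prod_def distrib_left sum.distrib)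
  then have "v \<bullet>c (B *\<^sub>v v) = (\<Sum>m<n. ((if m = i then x else 0) + (if m = j then y else 0))
      * cnj (B $$ (m,i) * x + B $$ (m,j) * y))"
    using assms(1) by (simp add: quadratic_form_eq_sum[of _ n] v_def del: index_mult_mat_vec)
  also have "\<dots> = x * cnj (B $$ (i,i) * x + B $$ (i,j) * y) + y * cnj (B $$ (j,i) * x + B $$ (j,j) * y)"
    using assms(2,3) by (simp add: distrib_right sum.distrib del: complex_cnj_add complex_cnj_mult)
  finally show ?thesis .
qed

(* Polarisation: the quadratic form is real at x e_i + y e_j for (x, y) = (1, 0), (0, 1),
  (1, 1) and (1, \<i>). *)
lemma psd_hermitian:
  assumes "psd n B" "i < n" "j < n"
  shows "B $$ (j,i) = cnj (B $$ (i,j))"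
proof -
  have B: "B \<in> carrier_mat n n" and real: "\<And>v. v \<in> carrier_vec n \<Longrightarrow> Im (v \<bullet>c (B *\<^sub>v v)) = 0"
    using assms(1) unfolding psd_def by blast+
  have im: "Im (x * cnj (B $$ (i,i) * x + B $$ (i,j) * y) + y * cnj (B $$ (j,i) * x + B $$ (j,j) * y)) = 0"
    for x y
  proof -
    let ?v = "vec n (\<lambda>m. (if m = i then x else 0) + (if m = j then y else 0))"
    have "Im (?v \<bullet>c (B *\<^sub>v ?v)) = 0" by (rule real) simp
    then show ?thesis by (simp only: quadratic_form_two_point[OF B assms(2,3)])
  qed
  have ii: "Im (B $$ (i,i)) = 0" and jj: "Im (B $$ (j,j)) = 0"
    using im[of 1 0] im[of 0 1] by simp_all
  have "Im (B $$ (i,j)) + Im (B $$ (j,i)) = 0" using im[of 1 1] ii jj by simp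
  moreover have "Re (B $$ (i,j)) = Re (B $$ (j,i))" using im[of 1 \<i>] ii jj by (simp add: algebra_simps)
  ultimately show ?thesis by (simp add: complex_eq_iff)
qed

lemma hermitian_square_eq_zero:
  fixes E :: "complex mat"
  assumes E: "E \<in> carrier_mat n n" and herm: "\<And>i k. i < n \<Longrightarrow> k < n \<Longrightarrow> E $$ (k,i) = cnj (E $$ (i,k))"
    and sq: "E * E = 0\<^sub>m n n"
  shows "E = 0\<^sub>m n n"
proof (rule eq_matI)
  fix i k assume "i < dim_row (0\<^sub>m n n :: complex mat)" "k < dim_col (0\<^sub>m n n :: complex mat)"
  then have ik: "i < n" "k < n" by simp_all
  have "complex_of_real (\<Sum>l<n. (cmod (E $$ (i,l)))\<^sup>2) = (\<Sum>l<n. E $$ (i,l) * cnj (E $$ (i,l)))"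
    by (simp only: of_real_sum complex_norm_square)
  also have "\<dots> = (\<Sum>l<n. E $$ (i,l) * E $$ (l,i))"
    by (rule sum.cong[OF refl]) (simp add: herm[OF ik(1)])
  also have "\<dots> = (E * E) $$ (i,i)"
    using E ik by (simp add: scalar_prod_def atLeast0LessThan)
  also have "\<dots> = 0" using sq ik by simp
  finally have "(\<Sum>l<n. (cmod (E $$ (i,l)))\<^sup>2) = 0" by (simp only: of_real_eq_0_iff)
  then have "cmod (E $$ (i,k)) = 0" using ik by (subst (asm) sum_nonneg_eq_0_iff) auto
  then show "E $$ (i,k) = 0\<^sub>m n n $$ (i,k)" using ik by simp
qed (use E in auto)

lemma commute_mat_diag_of_commute_square:
  fixes c :: "nat \<Rightarrow> real"
  assumes c: "\<forall>i<n. c i \<ge> 0" and B: "B \<in> carrier_mat n n"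
    and comm: "B * mat_diag n (\<lambda>i. complex_of_real (c i ^ 2)) = mat_diag n (\<lambda>i. complex_of_real (c i ^ 2)) * B"
  shows "B * mat_diag n (\<lambda>i. complex_of_real (c i)) = mat_diag n (\<lambda>i. complex_of_real (c i)) * B"
proof -
  have "B $$ (i,j) * complex_of_real (c j) = complex_of_real (c i) * B $$ (i,j)"
    if ij: "i < n" "j < n" for i j
  proof (cases "B $$ (i,j) = 0")
    case False
    have "B $$ (i,j) * complex_of_real (c j ^ 2) = complex_of_real (c i ^ 2) * B $$ (i,j)"
      using arg_cong[OF comm, of "\<lambda>M. M $$ (i,j)"] B ij
      by (simp add: mat_diag_mult_left[of _ n n] mat_diag_mult_right[of _ n n] del: of_real_power)
    with False have "c j ^ 2 = c i ^ 2" by (simp add: mult.commute del: of_real_power)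
    then have "c j = c i" using c ij by (simp add: power2_eq_iff_nonneg)
    then show ?thesis by (simp add: mult.commute)
  qed simp
  then show ?thesis
    using B by (intro eq_matI) (auto simp: mat_diag_mult_left[of _ n n] mat_diag_mult_right[of _ n n])
qed

lemma mat_diag_kernel_of_psd_sum:
  fixes n :: nat and c :: "nat \<Rightarrow> real"
  defines "C \<equiv> mat_diag n (\<lambda>i. complex_of_real (c i))"
  assumes B: "psd n B" and c: "\<forall>i<n. c i \<ge> 0" and w: "w \<in> carrier_vec n"
    and kernel: "(B + C) *\<^sub>v w = 0\<^sub>v n"
  shows "C *\<^sub>v w = 0\<^sub>v n"
proof -
  have Bc: "B \<in> carrier_mat n n" and B_nonneg: "Re (w \<bullet>c (B *\<^sub>v w)) \<ge> 0"
    using B w unfolding psd_def by auto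
  have Cc: "C \<in> carrier_mat n n" unfolding C_def by simp
  then have Bw: "B *\<^sub>v w \<in> carrier_vec n" and Cw: "C *\<^sub>v w \<in> carrier_vec n"
    using Bc w by auto
  have "w \<bullet>c (B *\<^sub>v w) + w \<bullet>c (C *\<^sub>v w) = w \<bullet> (conjugate (B *\<^sub>v w) + conjugate (C *\<^sub>v w))"
    using w Bw Cw by (simp add: scalar_prod_add_distrib[of _ n])
  also have "\<dots> = w \<bullet>c ((B + C) *\<^sub>v w)"
    using Bc Cc w by (simp add: add_mult_distrib_mat_vec[of _ n n] conjugate_add_vec[OF Bw Cw])
  also have "\<dots> = 0" using kernel w by simp
  finally have "Re (w \<bullet>c (B *\<^sub>v w)) + Re (w \<bullet>c (C *\<^sub>v w)) = 0"
    by (metis plus_complex.sel(1) zero_complex.sel(1))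
  moreover have "Re (w \<bullet>c (C *\<^sub>v w)) = (\<Sum>m<n. c m * (cmod (w $ m))\<^sup>2)"
    using w by (simp add: C_def quadratic_form_mat_diag)
  moreover have "(\<Sum>m<n. c m * (cmod (w $ m))\<^sup>2) \<ge> 0"
    using c by (auto intro!: sum_nonneg)
  ultimately have "(\<Sum>m<n. c m * (cmod (w $ m))\<^sup>2) = 0"
    using B_nonneg by linarith
  then have "c m * (cmod (w $ m))\<^sup>2 = 0" if "m < n" for m
    using c that by (subst (asm) sum_nonneg_eq_0_iff) auto
  then show ?thesis
    using w by (auto simp: C_def mat_diag_mult_vec_index carrier_matD[OF mat_diag_dim]
        simp del: index_mult_mat_vec)
qed

lemma psd_sqrt_mat_diag_unique:
  fixes c :: "nat \<Rightarrow> real"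
  assumes c: "\<forall>i<n. c i \<ge> 0" and B: "psd n B"
    and sq: "B * B = mat_diag n (\<lambda>i. complex_of_real (c i ^ 2))"
  shows "B = mat_diag n (\<lambda>i. complex_of_real (c i))"
proof -
  define C where "C = mat_diag n (\<lambda>i. complex_of_real (c i))"
  define E where "E = B - C"
  have Bc: "B \<in> carrier_mat n n" using B unfolding psd_def by blast
  have Cc: "C \<in> carrier_mat n n" unfolding C_def by simp
  have Ec: "E \<in> carrier_mat n n" unfolding E_def using Bc Cc by auto
  have CC: "C * C = B * B"
    unfolding sq C_def by (simp add: power2_eq_square)
  have "B * (B * B) = (B * B) * B" using Bc by (simp add: assoc_mult_mat[of _ n n])
  then have BC: "B * C = C * B"
    unfolding C_def using commute_mat_diag_of_commute_square[OF c Bc] sq by simp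
  have "(B + C) * E = (B * B + C * B) - (B * C + C * C)"
    using Bc Cc by (simp add: E_def add_mult_distrib_mat[of _ n n] mult_minus_distrib_mat[of _ n n])
  also have "\<dots> = 0\<^sub>m n n"
    unfolding CC BC using Bc Cc by (intro eq_matI) auto
  finally have kernel: "(B + C) * E = 0\<^sub>m n n" .
  have "E * E = 0\<^sub>m n n"
  proof (rule eq_matI)
    fix i j assume "i < dim_row (0\<^sub>m n n :: complex mat)" "j < dim_col (0\<^sub>m n n :: complex mat)"
    then have ij: "i < n" "j < n" by simp_all
    let ?w = "col E j"
    have w: "?w \<in> carrier_vec n" using Ec by (simp add: carrier_vecI)
    have "(B + C) *\<^sub>v ?w = col ((B + C) * E) j"
      using Bc Cc Ec ij by (intro col_mult2[symmetric]) auto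
    also have "\<dots> = 0\<^sub>v n" using kernel ij by simp
    finally have "(B + C) *\<^sub>v ?w = 0\<^sub>v n" .
    then have Cw: "C *\<^sub>v ?w = 0\<^sub>v n"
      unfolding C_def using mat_diag_kernel_of_psd_sum[OF B c w] by simp
    then have "B *\<^sub>v ?w = 0\<^sub>v n"
      using \<open>(B + C) *\<^sub>v ?w = 0\<^sub>v n\<close> Bc Cc w by (simp add: add_mult_distrib_mat_vec[of _ n n])
    then have Ew: "E *\<^sub>v ?w = 0\<^sub>v n"
      using Cw Bc Cc w by (simp add: E_def minus_mult_distrib_mat_vec[of _ n n])
    have "(E * E) $$ (i,j) = col (E * E) j $ i"
      using Ec ij by simp
    also have "\<dots> = (E *\<^sub>v ?w) $ i"
      using Ec ij by (simp only: col_mult2[OF Ec Ec])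
    finally show "(E * E) $$ (i,j) = 0\<^sub>m n n $$ (i,j)"
      using Ew ij by simp
  qed (use Ec in auto)
  moreover have "E $$ (k,i) = cnj (E $$ (i,k))" if "i < n" "k < n" for i k
    using psd_hermitian[OF B that] that Bc by (simp add: E_def C_def mat_diag_def)
  ultimately have E0: "E = 0\<^sub>m n n" using hermitian_square_eq_zero[OF Ec] by blast
  show ?thesis
    unfolding C_def[symmetric]
  proof (rule eq_matI)
    fix i j assume "i < dim_row C" "j < dim_col C"
    then show "B $$ (i,j) = C $$ (i,j)"
      using arg_cong[OF E0, of "\<lambda>M. M $$ (i,j)"] Bc Cc by (simp add: E_def)
  qed (simp_all add: carrier_matD[OF Bc] carrier_matD[OF Cc])
qed

lemma trace_norm_mat_diag:
  fixes a :: "nat \<Rightarrow> real"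
  shows "trace_norm (mat_diag n (\<lambda>i. complex_of_real (a i))) = (\<Sum>i<n. \<bar>a i\<bar>)"
proof -
  let ?A = "mat_diag n (\<lambda>i. complex_of_real (a i))"
  let ?R = "mat_diag n (\<lambda>i. complex_of_real \<bar>a i\<bar>)"
  have "dagger ?A = ?A" by (rule eq_matI) (auto simp: dagger_def mat_diag_def)
  then have A_square: "dagger ?A * ?A = ?R * ?R"
    unfolding mat_diag_diag of_real_mult[symmetric] abs_mult_self_eq by simp
  have R_square: "?R * ?R = mat_diag n (\<lambda>i. complex_of_real (\<bar>a i\<bar> ^ 2))"
    unfolding mat_diag_diag power2_eq_square of_real_mult ..
  have "(THE B. psd (dim_col ?A) B \<and> B * B = dagger ?A * ?A) = ?R"
  proof (rule the_equality)
    show "psd (dim_col ?A) ?R \<and> ?R * ?R = dagger ?A * ?A"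
      using psd_mat_diag[of n "\<lambda>i. \<bar>a i\<bar>"] by (simp add: A_square carrier_matD[OF mat_diag_dim])
    show "B = ?R" if "psd (dim_col ?A) B \<and> B * B = dagger ?A * ?A" for B
    proof -
      have "\<forall>i<n. \<bar>a i\<bar> \<ge> 0" by simp
      moreover have "psd n B" using that by (simp add: carrier_matD[OF mat_diag_dim])
      moreover have "B * B = mat_diag n (\<lambda>i. complex_of_real (\<bar>a i\<bar> ^ 2))"
        using that unfolding A_square R_square by blast
      ultimately show ?thesis by (rule psd_sqrt_mat_diag_unique)
    qed
  qed
  then show ?thesis by (simp add: trace_norm_def mtrace_def mat_diag_def)
qed

lemma trace_norm_diag_state_diff:
  "trace_norm (diag_state d q - diag_state d p) = (\<Sum>j=1..d. \<bar>q j - p j\<bar>)"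
proof -
  have "diag_state d q - diag_state d p = mat_diag d (\<lambda>i. complex_of_real (q (Suc i) - p (Suc i)))"
    by (rule eq_matI) (auto simp: diag_state_def mat_diag_def)
  then show ?thesis by (simp add: trace_norm_mat_diag sum.atLeast1_atMost_eq del: of_real_diff)
qed

lemma bnd_ge_min:
  assumes cond_refl: "\<And>s. 1 \<le> s \<Longrightarrow> s \<le> d \<Longrightarrow> cond s s"
  shows "min i d \<le> bnd d cond i"
proof (induction i)
  case (Suc i)
  show ?case
  proof (cases "d \<le> bnd d cond i")
    case False
    let ?P = "\<lambda>k. k \<le> d \<and> cond (Suc (bnd d cond i)) k"
    have "?P (Suc (bnd d cond i))" using False cond_refl by auto
    then have "Suc (bnd d cond i) \<le> (GREATEST k. ?P k)"
      by (rule Greatest_le_nat[where b = d]) auto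
    then show ?thesis using False Suc.IH by simp
  qed simp
qed simp

lemma binned_eq_bin_average:
  assumes cond_refl: "\<And>s. 1 \<le> s \<Longrightarrow> s \<le> d \<Longrightarrow> cond s s"
    and j: "1 \<le> j" "j \<le> d"
  obtains s k where "1 \<le> s" "s \<le> j" "j \<le> k" "k \<le> d" "cond s k"
    "binned d cond p j = (\<Sum>m\<in>{s..k}. p m) / real (card {s..k})"
proof -
  define i where "i = (LEAST i. j \<le> bnd d cond i)"
  define s where "s = Suc (bnd d cond (i - 1))"
  let ?P = "\<lambda>k. k \<le> d \<and> cond s k"
  have "min d d \<le> bnd d cond d" by (rule bnd_ge_min) (rule cond_refl)
  then have "j \<le> bnd d cond d" using j by simp
  then have j_i: "j \<le> bnd d cond i"
    unfolding i_def by (rule LeastI)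
  then have "i \<noteq> 0" using j by (cases i) auto
  have "\<not> j \<le> bnd d cond (i - 1)"
    unfolding i_def by (rule not_less_Least) (use \<open>i \<noteq> 0\<close> in \<open>simp add: i_def\<close>)
  then have s_j: "s \<le> j" by (simp add: s_def)
  have bnd_i: "bnd d cond i = (GREATEST k. ?P k)"
    using \<open>i \<noteq> 0\<close> s_j j by (cases i) (auto simp: s_def)
  have "?P s" using cond_refl s_j j by (auto simp: s_def)
  then have "?P (bnd d cond i)"
    unfolding bnd_i by (rule GreatestI_nat[where b = d]) auto
  moreover have "binned d cond p j = (\<Sum>m\<in>{s..bnd d cond i}. p m) / real (card {s..bnd d cond i})"
    unfolding binned_def Let_def i_def[symmetric] s_def by simp
  ultimately show ?thesis
    using that[of s "bnd d cond i"] s_j j_i by (simp add: s_def)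
qed

lemma average_antitone_dist_le:
  fixes p :: "nat \<Rightarrow> real"
  assumes antitone: "\<And>a b. s \<le> a \<Longrightarrow> a \<le> b \<Longrightarrow> b \<le> k \<Longrightarrow> p b \<le> p a"
    and j: "s \<le> j" "j \<le> k"
  shows "\<bar>(\<Sum>m\<in>{s..k}. p m) / real (card {s..k}) - p j\<bar> \<le> p s - p k"
proof -
  let ?avg = "(\<Sum>m\<in>{s..k}. p m) / real (card {s..k})"
  have card: "real (card {s..k}) > 0" using j by simp
  have "(\<Sum>m\<in>{s..k}. p m) \<le> real (card {s..k}) * p s"
    using sum_mono[of "{s..k}" p "\<lambda>_. p s"] antitone by auto
  then have "?avg \<le> p s" using card by (simp add: divide_le_eq mult.commute)
  moreover have "real (card {s..k}) * p k \<le> (\<Sum>m\<in>{s..k}. p m)"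
    using sum_mono[of "{s..k}" "\<lambda>_. p k" p] antitone by auto
  then have "p k \<le> ?avg" using card by (simp add: le_divide_eq mult.commute)
  moreover have "p k \<le> p j" "p j \<le> p s" using antitone j by auto
  ultimately show ?thesis by linarith
qed

lemma binned_dist_le:
  fixes p :: "nat \<Rightarrow> real"
  assumes cond_refl: "\<And>s. 1 \<le> s \<Longrightarrow> s \<le> d \<Longrightarrow> cond s s"
    and antitone: "\<forall>i\<in>{1..d}. \<forall>j\<in>{1..d}. i \<le> j \<longrightarrow> p j \<le> p i"
    and j: "1 \<le> j" "j \<le> d"
  obtains s k where "1 \<le> s" "s \<le> j" "j \<le> k" "k \<le> d" "cond s k"
    "\<bar>binned d cond p j - p j\<bar> \<le> p s - p k"
proof -
  obtain s k where sk: "1 \<le> s" "s \<le> j" "j \<le> k" "k \<le> d" "cond s k"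
    and avg: "binned d cond p j = (\<Sum>m\<in>{s..k}. p m) / real (card {s..k})"
    using binned_eq_bin_average[OF cond_refl j] .
  have "\<bar>binned d cond p j - p j\<bar> \<le> p s - p k"
    unfolding avg by (rule average_antitone_dist_le) (use antitone sk in auto)
  with sk that show ?thesis by blast
qed

lemma trace_norm_binned_le:
  fixes p e :: "nat \<Rightarrow> real"
  assumes cond_refl: "\<And>s. 1 \<le> s \<Longrightarrow> s \<le> d \<Longrightarrow> cond s s"
    and antitone: "\<forall>i\<in>{1..d}. \<forall>j\<in>{1..d}. i \<le> j \<longrightarrow> p j \<le> p i"
    and bin_spread: "\<And>s j k. 1 \<le> s \<Longrightarrow> s \<le> j \<Longrightarrow> j \<le> k \<Longrightarrow> k \<le> d \<Longrightarrow> cond s k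
      \<Longrightarrow> p s - p k \<le> e j"
  shows "trace_norm (diag_state d (binned d cond p) - diag_state d p) \<le> (\<Sum>j=1..d. e j)"
proof -
  have "\<bar>binned d cond p j - p j\<bar> \<le> e j" if "j \<in> {1..d}" for j
  proof -
    from that have j: "1 \<le> j" "j \<le> d" by simp_all
    obtain s k where "1 \<le> s" "s \<le> j" "j \<le> k" "k \<le> d" "cond s k"
      and "\<bar>binned d cond p j - p j\<bar> \<le> p s - p k"
      using binned_dist_le[where cond = cond, OF cond_refl antitone j] by blast
    with bin_spread show ?thesis by fastforce
  qed
  then show ?thesis
    unfolding trace_norm_diag_state_diff by (rule sum_mono)
qed

lemma trace_norm_sigma_A_le:
  assumes antitone: "\<forall>i\<in>{1..d}. \<forall>j\<in>{1..d}. i \<le> j \<longrightarrow> p j \<le> p i" and "\<epsilon> \<ge> 0"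
  shows "trace_norm (sigma_A d \<epsilon> p - diag_state d p) \<le> \<epsilon>"
proof -
  have "trace_norm (sigma_A d \<epsilon> p - diag_state d p) \<le> (\<Sum>j=1..d. \<epsilon> / real d)"
    unfolding sigma_A_def
    by (rule trace_norm_binned_le[OF _ antitone]) (use \<open>\<epsilon> \<ge> 0\<close> in \<open>auto simp: arith_cond_def\<close>)
  also have "\<dots> \<le> \<epsilon>" using \<open>\<epsilon> \<ge> 0\<close> by simp
  finally show ?thesis .
qed

lemma trace_norm_sigma_G_le:
  assumes nonneg: "\<forall>i\<in>{1..d}. p i \<ge> 0"
    and antitone: "\<forall>i\<in>{1..d}. \<forall>j\<in>{1..d}. i \<le> j \<longrightarrow> p j \<le> p i" and "\<epsilon> \<ge> 0"
  shows "trace_norm (sigma_G d \<epsilon> p - diag_state d p) \<le> \<epsilon> * (\<Sum>j=1..d. p j)"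
proof -
  have "trace_norm (sigma_G d \<epsilon> p - diag_state d p) \<le> (\<Sum>j=1..d. \<epsilon> * p j)"
    unfolding sigma_G_def
  proof (rule trace_norm_binned_le[OF _ antitone])
    show "geom_cond \<epsilon> p s s" if "1 \<le> s" "s \<le> d" for s
      using nonneg that \<open>\<epsilon> \<ge> 0\<close> by (simp add: geom_cond_def algebra_simps)
    show "p s - p k \<le> \<epsilon> * p j"
      if "1 \<le> s" "s \<le> j" "j \<le> k" "k \<le> d" "geom_cond \<epsilon> p s k" for s j k
    proof -
      have "p k \<le> p j" using antitone that by auto
      then have "\<epsilon> * p k \<le> \<epsilon> * p j" using \<open>\<epsilon> \<ge> 0\<close> by (rule mult_left_mono)
      with that(5) show ?thesis by (simp add: geom_cond_def algebra_simps)
    qed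
  qed
  then show ?thesis by (simp add: sum_distrib_left)
qed

theorem proposition1:
  fixes d :: nat and p :: "nat \<Rightarrow> real" and \<epsilon> :: real
  assumes "d \<ge> 1"
    and "\<forall>i\<in>{1..d}. p i \<ge> 0"
    and "(\<Sum>i=1..d. p i) = 1"
    and "\<forall>i\<in>{1..d}. \<forall>j\<in>{1..d}. i \<le> j \<longrightarrow> p j \<le> p i"
    and "\<epsilon> > 0"
  shows "trace_norm (sigma_A d \<epsilon> p - diag_state d p) \<le> \<epsilon>
       \<and> trace_norm (sigma_G d \<epsilon> p - diag_state d p) \<le> \<epsilon>"
  using trace_norm_sigma_A_le[OF assms(4)] trace_norm_sigma_G_le[OF assms(2,4)] assms(3,5)
  by simp

end
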